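(* Let $a_0=0$ and let $a_1<a_2<\cdots$ be the increasing enumeration of the set $\{m\ge1:\ c_m=1\}$ (so that, for $m\ge1$, $c_m=1$ if and only if $m=a_n$ for some $n>0$). Then $a_1=1$, $a_2=2$, $a_3=7$, and for all $n\ge 1$: $$a_{4n}=a_{4n-1}+1,\quad a_{4n+1}=a_{4n-1}+2,\quad a_{4n+2}=a_{4n-1}+3,\quad a_{8n+3}=a_{8n}+7,\quad a_{8n+7}=4a_{4n+3}+3.$$
   Context: For $n\in\mathbb{N}$ let $s_2(n)$ be the sum of the binary digits of $n$ and $t_n=s_2(n)\bmod 2$ (the Prouhet–Thue–Morse sequence). Let $F(X)=\sum_{n\ge1}t_nX^n\in\mathbb{F}_2[[X]]$ and let $G(X)=\sum_{n\ge1}c_nX^n\in\mathbb{F}_2[[X]]$ be its compositional inverse, i.e. $F(G(X))=G(F(X))=X$. The $c_n$ are identified with integers in $\{0,1\}$. *)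

theory Defs
  imports "HOL-Computational_Algebra.Formal_Power_Series" "HOL-Library.Z2" "HOL-Library.Infinite_Set"
begin

fun s2 :: "nat \<Rightarrow> nat" where
  "s2 n = (if n = 0 then 0 else n mod 2 + s2 (n div 2))"

definition tm :: "nat \<Rightarrow> bit" where
  "tm n = (if odd (s2 n) then 1 else 0)"

definition TM_F :: "bit fps" where
  "TM_F = Abs_fps (\<lambda>n. if n = 0 then 0 else tm n)"

definition TM_G :: "bit fps" where
  "TM_G = fps_inv TM_F"

definition cG :: "nat \<Rightarrow> nat" where
  "cG n = (if fps_nth TM_G n = 1 then 1 else 0)"

definition onesG :: "nat set" where
  "onesG = {m. m \<ge> 1 \<and> cG m = 1}"

definition aG :: "nat \<Rightarrow> nat" where
  "aG n = (if n = 0 then 0 else enumerate onesG (n - 1))"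

end

theory Submission
  imports Defs
begin

text \<open>
  Over \<open>\<bbbF>\<^sub>2\<close> the recurrences \<open>t\<^sub>2\<^sub>k = t\<^sub>k\<close>, \<open>t\<^sub>2\<^sub>k\<^sub>+\<^sub>1 = t\<^sub>k + 1\<close> and the Frobenius
  \<open>A(X)\<^sup>2 = A(X\<^sup>2)\<close> give \<open>(1+X)\<^sup>2 F = (1+X)\<^sup>3 F\<^sup>2 + X\<close>. Substituting \<open>X := G\<close>
  yields a relation which says exactly that \<open>Z = 1 + X(1+G)\<close> satisfies \<open>Z\<^sup>3 = 1 + X\<close>.
  On the other hand let \<open>P = \<Sum> X\<^sup>q\<close>, summed over the \<open>q\<close> whose base-4 digits are all even,
  i.e. \<open>q = 2s\<close> with \<open>s\<close> a Moser--de Bruijn number. The digit structure gives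
  \<open>P = (1+X)\<^sup>2 P\<^sup>4\<close>, so \<open>(1+X)\<^sup>3 P\<^sup>4\<close> is another cube root of \<open>1 + X\<close> with constant
  term 1. Such cube roots are unique, hence \<open>Z = (1+X+X\<^sup>2+X\<^sup>3) P(X\<^sup>4)\<close>: for \<open>m \<ge> 1\<close>,
  \<open>c\<^sub>m = 1\<close> iff \<open>\<lfloor>(m+1)/4\<rfloor>\<close> has even base-4 digits. So the support of \<open>G\<close> consists of
  the blocks \<open>8s-1, 8s, 8s+1, 8s+2\<close> for Moser--de Bruijn numbers \<open>s\<close>, and the
  recurrences for \<open>a\<^sub>n\<close> follow from \<open>s(2k) = 4s(k)\<close>, \<open>s(2k+1) = 4s(k) + 1\<close>.
\<close>

lemma bit_fps_two: "(2 :: bit fps) = 0"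
  by (simp add: numeral_fps_const)

definition fps_expand :: "nat \<Rightarrow> 'a::zero fps \<Rightarrow> 'a fps" where
  "fps_expand k A = Abs_fps (\<lambda>n. if k dvd n then fps_nth A (n div k) else 0)"

lemma fps_expand_nth [simp]:
  "fps_nth (fps_expand k A) n = (if k dvd n then fps_nth A (n div k) else 0)"
  by (simp add: fps_expand_def)

lemma fps_expand_expand: "fps_expand a (fps_expand b A) = fps_expand (a * b) A"
proof (rule fps_ext)
  fix n
  have "a dvd n \<and> b dvd n div a \<longleftrightarrow> a * b dvd n"
    by (metis dvd_div_iff_mult dvd_mult_imp_div dvd_mult_left mult.commute mult_is_0)
  then show "fps_nth (fps_expand a (fps_expand b A)) n = fps_nth (fps_expand (a * b) A) n"
    by (auto simp: div_div_eq_right)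
qed

lemma fps_geometric_mult_expand_nth:
  fixes A :: "'a::comm_ring_1 fps"
  assumes "k > 0"
  shows "fps_nth ((\<Sum>i<k. fps_X ^ i) * fps_expand k A) n = fps_nth A (n div k)"
proof -
  have only_residue: "(\<not> n < i \<and> k dvd n - i) \<longleftrightarrow> i = n mod k" if "i < k" for i
    using that by (metis linorder_not_less mod_eq_dvd_iff_nat mod_if mod_less_eq_dividend)
  have "fps_nth ((\<Sum>i<k. fps_X ^ i) * fps_expand k A) n
      = (\<Sum>i<k. if i = n mod k then fps_nth A (n div k) else 0)"
    unfolding sum_distrib_right fps_sum_nth fps_X_power_mult_nth
  proof (rule sum.cong)
    fix i assume "i \<in> {..<k}"
    then show "(if n < i then 0 else fps_nth (fps_expand k A) (n - i))
        = (if i = n mod k then fps_nth A (n div k) else 0)"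
      using only_residue[of i] by (auto simp: minus_mod_eq_mult_div)
  qed simp
  also have "\<dots> = fps_nth A (n div k)"
    using assms by simp
  finally show ?thesis .
qed

lemma fps_one_plus_X_mult_expand_2_nth:
  "fps_nth ((1 + fps_X) * fps_expand 2 (A :: 'a::comm_ring_1 fps)) n = fps_nth A (n div 2)"
  using fps_geometric_mult_expand_nth[of 2 A n] by (simp add: numeral_2_eq_2)

lemma sum_bit_symmetric:
  fixes f :: "nat \<Rightarrow> bit"
  assumes "\<And>i. i \<le> n \<Longrightarrow> f (n - i) = f i"
  shows "(\<Sum>i\<le>n. f i) = (if even n then f (n div 2) else 0)"
proof -
  let ?L = "{i. 2 * i < n}" and ?M = "{i. 2 * i = n}" and ?R = "{i. i \<le> n \<and> n < 2 * i}"
  have fin: "finite ?L" "finite ?M" "finite ?R"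
    by (auto intro: finite_subset[of _ "{..n}"])
  have "(\<Sum>i\<le>n. f i) = sum f (?L \<union> ?M \<union> ?R)"
    by (rule sum.cong) auto
  also have "\<dots> = sum f ?L + sum f ?M + sum f ?R"
    using fin by (simp add: sum.union_disjoint Int_Un_distrib2 disjoint_iff)
  also have "sum f ?R = sum f ?L"
    by (rule sum.reindex_bij_witness[of _ "\<lambda>i. n - i" "\<lambda>i. n - i"]) (auto simp: assms)
  also have "?M = (if even n then {n div 2} else {})"
    by auto
  moreover have "\<And>a b :: bit. a + b + a = b"
    by (case_tac a; case_tac b) simp_all
  ultimately have "(\<Sum>i\<le>n. f i) = sum f (if even n then {n div 2} else {})"
    by (simp only:)
  then show ?thesis
    by simp
qed

lemma bit_fps_square: "(A :: bit fps) ^ 2 = fps_expand 2 A"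
proof (rule fps_ext)
  fix n
  have "fps_nth (A ^ 2) n = (\<Sum>i\<le>n. fps_nth A i * fps_nth A (n - i))"
    by (simp add: power2_eq_square fps_mult_nth atLeast0AtMost)
  also have "\<dots> = (if even n then fps_nth A (n div 2) * fps_nth A (n - n div 2) else 0)"
    by (rule sum_bit_symmetric) (simp add: mult.commute)
  also have "\<dots> = fps_nth (fps_expand 2 A) n"
    by (auto elim!: evenE)
  finally show "fps_nth (A ^ 2) n = fps_nth (fps_expand 2 A) n" .
qed

lemma bit_fps_fourth_power: "(A :: bit fps) ^ 4 = fps_expand 4 A"
proof -
  have "A ^ 4 = (A ^ 2) ^ 2" by (simp flip: power_mult)
  then show ?thesis using fps_expand_expand[of 2 2 A] by (simp add: bit_fps_square)
qed

lemma bit_fps_one_plus_X_square: "(1 + fps_X :: bit fps) ^ 2 = 1 + fps_X ^ 2"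
proof -
  have "(1 + fps_X :: bit fps) ^ 2 = 1 + fps_X ^ 2 + 2 * fps_X"
    by algebra
  then show ?thesis by (simp add: bit_fps_two)
qed

lemma bit_fps_one_plus_X_cube: "(1 + fps_X :: bit fps) ^ 3 = (\<Sum>i<4. fps_X ^ i)"
proof -
  have "(1 + fps_X :: bit fps) ^ 3 = (\<Sum>i<4. fps_X ^ i) + 2 * (fps_X + fps_X ^ 2)"
    by (simp add: numeral_eq_Suc algebra_simps power3_eq_cube power2_eq_square)
  then show ?thesis by (simp add: bit_fps_two)
qed

lemma fps_cube_eq_imp_eq:
  fixes A B :: "'a::field fps"
  assumes "A ^ 3 = B ^ 3" "fps_nth A 0 = 1" "fps_nth B 0 = 1" "(3::'a) \<noteq> 0"
  shows "A = B"
proof -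
  have "(A - B) * (A^2 + A*B + B^2) = A^3 - B^3" by algebra
  then have "(A - B) * (A^2 + A*B + B^2) = 0" using assms(1) by simp
  moreover have "fps_nth (A^2 + A*B + B^2) 0 \<noteq> 0"
    using assms(2-4) by (simp add: fps_power_zeroth)
  then have "A^2 + A*B + B^2 \<noteq> 0" by (metis fps_zero_nth)
  ultimately show ?thesis by simp
qed

declare s2.simps [simp del]

lemma s2_0 [simp]: "s2 0 = 0"
  by (subst s2.simps) simp

lemma s2_eq: "s2 n = n mod 2 + s2 (n div 2)"
  by (cases "n = 0") (simp, subst s2.simps, simp)

lemma tm_eq_half: "tm n = tm (n div 2) + (if odd n then 1 else 0)"
  by (auto simp: tm_def s2_eq[of n])

lemma fps_nth_TM_F: "fps_nth TM_F n = tm n"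
  by (simp add: TM_F_def tm_def)

lemma TM_F_eq: "TM_F = (1 + fps_X) * TM_F ^ 2 + Abs_fps (\<lambda>n. if odd n then 1 else 0)"
proof (rule fps_ext)
  fix n
  have "fps_nth ((1 + fps_X) * TM_F ^ 2) n = tm (n div 2)"
    by (simp add: bit_fps_square fps_one_plus_X_mult_expand_2_nth fps_nth_TM_F)
  then show "fps_nth TM_F n = fps_nth ((1 + fps_X) * TM_F ^ 2 + Abs_fps (\<lambda>n. if odd n then 1 else 0)) n"
    by (simp add: fps_nth_TM_F tm_eq_half[of n])
qed

lemma TM_F_functional_eq: "(1 + fps_X) ^ 2 * TM_F = (1 + fps_X) ^ 3 * TM_F ^ 2 + fps_X"
proof -
  define E :: "bit fps" where "E = Abs_fps (\<lambda>n. if odd n then 1 else 0)"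
  have E: "(1 + fps_X) ^ 2 * E = fps_X"
  proof (rule fps_ext)
    fix n
    show "fps_nth ((1 + fps_X) ^ 2 * E) n = fps_nth fps_X n"
      by (cases n; cases "n - 1")
        (auto simp: bit_fps_one_plus_X_square distrib_right fps_X_power_mult_nth E_def)
  qed
  have "(1 + fps_X) ^ 2 * TM_F = (1 + fps_X) ^ 2 * ((1 + fps_X) * TM_F ^ 2 + E)"
    using TM_F_eq unfolding E_def by (rule arg_cong)
  also have "\<dots> = (1 + fps_X) ^ 3 * TM_F ^ 2 + (1 + fps_X) ^ 2 * E"
    by algebra
  finally show ?thesis
    unfolding E .
qed

lemma TM_G_functional_eq: "(1 + TM_G) ^ 2 * fps_X = (1 + TM_G) ^ 3 * fps_X ^ 2 + TM_G"
proof -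
  have F0: "fps_nth TM_F 0 = 0" and F1: "fps_nth TM_F 1 \<noteq> 0"
    using s2_eq[of 1] by (simp_all add: fps_nth_TM_F tm_def)
  have G0: "fps_nth TM_G 0 = 0"
    by (simp add: TM_G_def fps_inv_def)
  have "((1 + fps_X) ^ 2 * TM_F) oo TM_G = ((1 + fps_X) ^ 3 * TM_F ^ 2 + fps_X) oo TM_G"
    using TM_F_functional_eq by simp
  moreover have "TM_F oo TM_G = fps_X"
    unfolding TM_G_def by (rule fps_inv_right[OF F0 F1])
  ultimately show ?thesis
    by (simp add: fps_compose_mult_distrib[OF G0] fps_compose_add_distrib
        fps_X_fps_compose_startby0[OF G0] flip: fps_compose_power[OF G0])
qed

lemma char_2_cube_eq:
  fixes x u :: "'a::comm_ring_1"
  assumes "(2::'a) = 0" and "u ^ 2 * x = u ^ 3 * x ^ 2 + (u - 1)"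
  shows "(1 + x * u) ^ 3 = 1 + x"
proof -
  have "(1 + x * u) ^ 3 = 1 + x + x * (u ^ 2 * x - (u ^ 3 * x ^ 2 + (u - 1)))
      + 2 * (2 * x * u + x ^ 2 * u ^ 2 + x ^ 3 * u ^ 3 - x)"
    by (simp add: algebra_simps power3_eq_cube power2_eq_square)
  then show ?thesis
    by (simp only: assms diff_self mult_zero_left mult_zero_right add_0_right)
qed

lemma TM_G_cube: "(1 + fps_X * (1 + TM_G)) ^ 3 = 1 + fps_X"
  by (rule char_2_cube_eq[OF bit_fps_two]) (use TM_G_functional_eq in simp)

fun moser_de_bruijn :: "nat \<Rightarrow> nat" where
  "moser_de_bruijn n = (if n = 0 then 0 else 4 * moser_de_bruijn (n div 2) + n mod 2)"

declare moser_de_bruijn.simps [simp del]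

lemma moser_de_bruijn_0 [simp]: "moser_de_bruijn 0 = 0"
  by (subst moser_de_bruijn.simps) simp

lemma moser_de_bruijn_double_plus:
  assumes "b < 2"
  shows "moser_de_bruijn (2 * k + b) = 4 * moser_de_bruijn k + b"
  using assms by (cases "2 * k + b = 0") (simp, subst moser_de_bruijn.simps, simp)

lemma moser_de_bruijn_double: "moser_de_bruijn (2 * k) = 4 * moser_de_bruijn k"
  using moser_de_bruijn_double_plus[of 0 k] by simp

lemma moser_de_bruijn_Suc_double: "moser_de_bruijn (Suc (2 * k)) = 4 * moser_de_bruijn k + 1"
  using moser_de_bruijn_double_plus[of 1 k] by simp

lemma moser_de_bruijn_Suc_gt: "moser_de_bruijn n < moser_de_bruijn (Suc n)"
proof (induction n rule: less_induct)
  case (less n)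
  show ?case
  proof (cases "even n")
    case True
    then obtain k where "n = 2 * k" by (rule evenE)
    then show ?thesis
      by (simp add: moser_de_bruijn_double moser_de_bruijn_Suc_double)
  next
    case False
    then obtain k where n: "n = Suc (2 * k)"
      using oddE by fastforce
    then have "moser_de_bruijn k < moser_de_bruijn (Suc k)"
      using less.IH by simp
    then have "moser_de_bruijn n < 4 * moser_de_bruijn (Suc k)"
      using n by (simp add: moser_de_bruijn_Suc_double)
    also have "4 * moser_de_bruijn (Suc k) = moser_de_bruijn (Suc n)"
      using n moser_de_bruijn_double[of "Suc k"] by simp
    finally show ?thesis .
  qed
qed

lemma strict_mono_moser_de_bruijn: "strict_mono moser_de_bruijn"
  by (simp add: strict_mono_Suc_iff moser_de_bruijn_Suc_gt)

lemma moser_de_bruijn_pos: "k \<ge> 1 \<Longrightarrow> moser_de_bruijn k \<ge> 1"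
  using strict_mono_imp_increasing[OF strict_mono_moser_de_bruijn, of k] by simp

definition base4_even_digits :: "nat set" where
  "base4_even_digits = range (\<lambda>k. 2 * moser_de_bruijn k)"

lemma base4_even_digits_iff:
  "q \<in> base4_even_digits \<longleftrightarrow> even q \<and> q div 4 \<in> base4_even_digits"
proof
  assume "q \<in> base4_even_digits"
  then obtain k where "q = 2 * moser_de_bruijn k"
    by (auto simp: base4_even_digits_def)
  then have "q = 8 * moser_de_bruijn (k div 2) + 2 * (k mod 2)"
    using moser_de_bruijn_double_plus[of "k mod 2" "k div 2"] by simp
  then have "even q" "q div 4 = 2 * moser_de_bruijn (k div 2)"
    by presburger+
  then show "even q \<and> q div 4 \<in> base4_even_digits"
    by (auto simp: base4_even_digits_def)
next
  assume "even q \<and> q div 4 \<in> base4_even_digits"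
  then obtain k where "even q" "q div 4 = 2 * moser_de_bruijn k"
    by (auto simp: base4_even_digits_def)
  then have "q = 2 * (4 * moser_de_bruijn k + q mod 4 div 2)"
    by presburger
  also have "\<dots> = 2 * moser_de_bruijn (2 * k + q mod 4 div 2)"
    by (simp add: moser_de_bruijn_double_plus)
  finally show "q \<in> base4_even_digits"
    by (auto simp: base4_even_digits_def)
qed

lemma zero_in_base4_even_digits: "0 \<in> base4_even_digits"
  unfolding base4_even_digits_def by (rule range_eqI[of _ _ 0]) simp

definition base4_even_digits_fps :: "bit fps" where
  "base4_even_digits_fps = Abs_fps (\<lambda>q. if q \<in> base4_even_digits then 1 else 0)"

lemma base4_even_digits_fps_eq:
  "base4_even_digits_fps = (1 + fps_X) ^ 2 * base4_even_digits_fps ^ 4"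
proof -
  let ?P = base4_even_digits_fps
  have half: "fps_nth ((1 + fps_X) * ?P ^ 2) n = fps_nth ?P (n div 2)" for n
    by (simp add: bit_fps_square fps_one_plus_X_mult_expand_2_nth)
  have "?P = ((1 + fps_X) * ?P ^ 2) ^ 2"
  proof (rule fps_ext)
    fix n
    have "fps_nth ?P n = (if even n then fps_nth ?P (n div 4) else 0)"
      by (simp add: base4_even_digits_fps_def base4_even_digits_iff[of n])
    also have "\<dots> = fps_nth (((1 + fps_X) * ?P ^ 2) ^ 2) n"
      by (simp add: bit_fps_square[of "(1 + fps_X) * ?P ^ 2"] half flip: div_mult2_eq)
    finally show "fps_nth ?P n = fps_nth (((1 + fps_X) * ?P ^ 2) ^ 2) n" .
  qed
  then show ?thesis
    by (simp add: power_mult_distrib flip: power_mult)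
qed

lemma base4_even_digits_fps_cube: "(1 + fps_X) ^ 2 * base4_even_digits_fps ^ 3 = 1"
proof -
  let ?P = base4_even_digits_fps
  have "?P * (1 - (1 + fps_X) ^ 2 * ?P ^ 3) = ?P - (1 + fps_X) ^ 2 * ?P ^ 4"
    by algebra
  also have "\<dots> = 0"
    by (simp only: base4_even_digits_fps_eq[symmetric] diff_self)
  finally have "?P * (1 - (1 + fps_X) ^ 2 * ?P ^ 3) = 0" .
  moreover have "fps_nth ?P 0 = 1"
    by (simp add: base4_even_digits_fps_def zero_in_base4_even_digits)
  ultimately show ?thesis
    by (metis fps_zero_nth mult_eq_0_iff one_neq_zero right_minus_eq)
qed

lemma TM_G_cube_root_eq: "1 + fps_X * (1 + TM_G) = (1 + fps_X) ^ 3 * base4_even_digits_fps ^ 4"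
proof (rule fps_cube_eq_imp_eq)
  let ?P = base4_even_digits_fps
  have "((1 + fps_X) ^ 3 * ?P ^ 4) ^ 3 = (1 + fps_X) * ((1 + fps_X) ^ 2 * ?P ^ 3) ^ 4"
    by (simp add: power_mult_distrib mult.assoc flip: power_mult power_Suc)
  then show "(1 + fps_X * (1 + TM_G)) ^ 3 = ((1 + fps_X) ^ 3 * ?P ^ 4) ^ 3"
    by (simp add: TM_G_cube base4_even_digits_fps_cube)
  show "fps_nth ((1 + fps_X) ^ 3 * ?P ^ 4) 0 = 1"
    by (simp add: fps_power_zeroth base4_even_digits_fps_def zero_in_base4_even_digits)
qed simp_all

lemma fps_nth_TM_G:
  assumes "m \<ge> 1"
  shows "fps_nth TM_G m = (if (m + 1) div 4 \<in> base4_even_digits then 1 else 0)"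
proof -
  have "fps_nth TM_G m = fps_nth (1 + fps_X * (1 + TM_G)) (Suc m)"
    using assms by simp
  also have "\<dots> = fps_nth base4_even_digits_fps (Suc m div 4)"
    by (simp add: TM_G_cube_root_eq bit_fps_one_plus_X_cube bit_fps_fourth_power
        fps_geometric_mult_expand_nth)
  finally show ?thesis
    by (simp add: base4_even_digits_fps_def)
qed

lemma onesG_eq: "onesG = {m. 1 \<le> m \<and> (m + 1) div 4 \<in> base4_even_digits}"
  by (auto simp: onesG_def cG_def fps_nth_TM_G split: if_splits)

lemma infinite_range_strict_mono:
  fixes f :: "nat \<Rightarrow> nat"
  shows "strict_mono f \<Longrightarrow> infinite (range f)"
  using finite_imageD infinite_UNIV_nat strict_mono_imp_inj_on by blast

lemma enumerate_range_strict_mono: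
  fixes f :: "nat \<Rightarrow> nat"
  assumes "strict_mono f"
  shows "enumerate (range f) n = f n"
proof -
  have "infinite (range f)"
    using assms by (rule infinite_range_strict_mono)
  then show ?thesis
  proof (induction n)
    case 0
    show ?case
      unfolding enumerate_0
      by (rule Least_equality) (auto simp: strict_mono_less_eq[OF assms])
  next
    case (Suc n)
    then show ?case
      unfolding enumerate_Suc''[OF Suc.prems] Suc.IH[OF Suc.prems]
      by (intro Least_equality)
        (auto simp: strict_mono_less[OF assms] strict_mono_less_eq[OF assms] Suc_le_eq)
  qed
qed

definition onesG_enum :: "nat \<Rightarrow> nat" where
  "onesG_enum i = 8 * moser_de_bruijn ((i + 2) div 4) + (i + 2) mod 4 - 1"

lemma onesG_enum_block:
  assumes "2 \<le> 4 * k + r" "r < 4"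
  shows "onesG_enum (4 * k + r - 2) = 8 * moser_de_bruijn k + r - 1"
proof -
  have "4 * k + r - 2 + 2 = 4 * k + r"
    using assms(1) by simp
  then show ?thesis
    using assms(2) by (simp add: onesG_enum_def)
qed

lemma strict_mono_onesG_enum: "strict_mono onesG_enum"
  unfolding strict_mono_Suc_iff
proof
  fix i :: nat
  define k r where "k = (i + 2) div 4" and "r = (i + 2) mod 4"
  have i: "onesG_enum i = 8 * moser_de_bruijn k + r - 1"
    by (simp add: onesG_enum_def k_def r_def)
  show "onesG_enum i < onesG_enum (Suc i)"
  proof (cases "r = 3")
    case True
    then have "(Suc i + 2) div 4 = Suc k" "(Suc i + 2) mod 4 = 0"
      unfolding k_def r_def by presburger+
    then show ?thesis
      using i True moser_de_bruijn_Suc_gt[of k] by (simp add: onesG_enum_def)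
  next
    case False
    then have "(Suc i + 2) div 4 = k" "(Suc i + 2) mod 4 = Suc r"
      unfolding k_def r_def by presburger+
    moreover have "1 \<le> 8 * moser_de_bruijn k + r"
      using moser_de_bruijn_pos[of k] by (cases "k = 0") (simp_all add: k_def r_def)
    ultimately show ?thesis
      using i by (simp add: onesG_enum_def)
  qed
qed

lemma range_onesG_enum: "range onesG_enum = onesG"
proof (intro set_eqI iffI)
  fix m
  assume "m \<in> range onesG_enum"
  then obtain i where m: "m = onesG_enum i" by auto
  define k r where "k = (i + 2) div 4" and "r = (i + 2) mod 4"
  have kr: "i = 4 * k + r - 2" "2 \<le> 4 * k + r" "r < 4"
    by (simp_all add: k_def r_def)
  then have "2 \<le> 8 * moser_de_bruijn k + r"
    using moser_de_bruijn_pos[of k] by (cases "k = 0") simp_all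
  moreover have "m = 8 * moser_de_bruijn k + r - 1"
    using m kr onesG_enum_block by simp
  ultimately have "1 \<le> m" "(m + 1) div 4 = 2 * moser_de_bruijn k"
    using kr(3) by simp_all
  then show "m \<in> onesG"
    by (auto simp: onesG_eq base4_even_digits_def)
next
  fix m
  assume "m \<in> onesG"
  then obtain k where m: "1 \<le> m" "(m + 1) div 4 = 2 * moser_de_bruijn k"
    by (auto simp: onesG_eq base4_even_digits_def)
  define r where "r = (m + 1) mod 4"
  have m_eq: "m + 1 = 8 * moser_de_bruijn k + r" "r < 4"
    using m(2) div_mult_mod_eq[of "m + 1" 4] by (simp_all add: r_def)
  have "2 \<le> 4 * k + r"
    using m(1) m_eq by (cases "k = 0") simp_all
  then have "onesG_enum (4 * k + r - 2) = m"
    using m_eq by (simp add: onesG_enum_block)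
  then show "m \<in> range onesG_enum"
    by (metis rangeI)
qed

lemma aG_block:
  assumes "2 \<le> 4 * k + r" "r < 4"
  shows "aG (4 * k + r - 1) = 8 * moser_de_bruijn k + r - 1"
proof -
  have "aG (4 * k + r - 1) = enumerate onesG (4 * k + r - 2)"
    using assms(1) by (simp add: aG_def numeral_2_eq_2)
  also have "\<dots> = 8 * moser_de_bruijn k + r - 1"
    by (simp flip: range_onesG_enum add: enumerate_range_strict_mono strict_mono_onesG_enum
        onesG_enum_block assms)
  finally show ?thesis .
qed

theorem mainTheorem6:
  shows "infinite onesG \<and> aG 1 = 1 \<and> aG 2 = 2 \<and> aG 3 = 7 \<and>
    (\<forall>n\<ge>1. aG (4*n) = aG (4*n - 1) + 1 \<and>
            aG (4*n + 1) = aG (4*n - 1) + 2 \<and>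
            aG (4*n + 2) = aG (4*n - 1) + 3 \<and>
            aG (8*n + 3) = aG (8*n) + 7 \<and>
            aG (8*n + 7) = 4 * aG (4*n + 3) + 3)"
proof (intro conjI allI impI)
  show "infinite onesG"
    using infinite_range_strict_mono[OF strict_mono_onesG_enum] by (simp add: range_onesG_enum)
  show "aG 1 = 1" "aG 2 = 2" "aG 3 = 7"
    using aG_block[of 0 2] aG_block[of 0 3] aG_block[of 1 0] moser_de_bruijn_Suc_double[of 0] by simp_all
  fix n :: nat
  assume "n \<ge> 1"
  then have "moser_de_bruijn n \<ge> 1" "moser_de_bruijn (Suc n) \<ge> 1"
    using moser_de_bruijn_pos[of n] moser_de_bruijn_pos[of "Suc n"] by simp_all
  moreover have "aG (4*n - 1) = 8 * moser_de_bruijn n - 1" "aG (4*n) = 8 * moser_de_bruijn n"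
    "aG (4*n + 1) = 8 * moser_de_bruijn n + 1" "aG (4*n + 2) = 8 * moser_de_bruijn n + 2"
    using \<open>n \<ge> 1\<close> aG_block[of n 0] aG_block[of n 1] aG_block[of n 2] aG_block[of n 3]
    by simp_all
  moreover have "aG (8*n) = 32 * moser_de_bruijn n"
    using aG_block[of "2 * n" 1] \<open>n \<ge> 1\<close> by (simp add: moser_de_bruijn_double)
  moreover have "aG (8*n + 3) = 32 * moser_de_bruijn n + 7"
    using aG_block[of "Suc (2 * n)" 0] by (simp add: moser_de_bruijn_Suc_double add.commute)
  moreover have "aG (8*n + 7) = 32 * moser_de_bruijn (Suc n) - 1"
    using aG_block[of "2 * Suc n" 0] moser_de_bruijn_double[of "Suc n"] by (simp add: add.commute)
  moreover have "aG (4*n + 3) = 8 * moser_de_bruijn (Suc n) - 1"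
    using aG_block[of "Suc n" 0] by (simp add: add.commute)
  ultimately show "aG (4*n) = aG (4*n - 1) + 1" "aG (4*n + 1) = aG (4*n - 1) + 2"
    "aG (4*n + 2) = aG (4*n - 1) + 3" "aG (8*n + 3) = aG (8*n) + 7"
    "aG (8*n + 7) = 4 * aG (4*n + 3) + 3"
    by simp_all
qed

end
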